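(* Let $p$ be a prime, let $V:=\{v_F: F\subseteq[4p],\ |F|=2p\}\subseteq\{0,1\}^{4p}\subseteq\mathbb{F}_p^{4p}$, let $C\subseteq[4p]$ with $|C|=3p$, and put $Q:=V\cup\{v_C\}$. If $y\in\mathrm{Sm}(\prec_{deg},Q)\setminus\mathrm{Sm}(\prec_{deg},V)$, then $\deg y\ge p$.
   Context: $[m]=\{1,\dots,m\}$; $v_F\in\{0,1\}^{4p}$ is the characteristic vector of $F$. Polynomials are in $\mathbb{F}_p[x_1,\ldots,x_{4p}]$. $\prec_{deg}$ is the deglex order (compare degrees first, ties broken lexicographically with $x_{4p}\prec\cdots\prec x_1$). $\mathrm{Sm}(\prec,X)$ is the set of monomials that are not the $\prec$-leading monomial of any nonzero polynomial over $\mathbb{F}_p$ vanishing on $X$. *)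

theory Defs
  imports Main "HOL-Library.Poly_Mapping" "HOL-Computational_Algebra.Primes"
begin

text \<open>Monomials in variables x_1..x_n are exponent vectors finitely supported maps nat to nat with support in {1..n};
  polynomials are finitely supported maps from monomials to coefficients.\<close>

type_synonym monom = "nat \<Rightarrow>\<^sub>0 nat"
type_synonym 'a mpoly = "monom \<Rightarrow>\<^sub>0 'a"

definition mdeg :: "monom \<Rightarrow> nat" where
  "mdeg m = (\<Sum>i\<in>Poly_Mapping.keys m. Poly_Mapping.lookup m i)"

text \<open>deglex: degree first, ties lexicographically with x_n < ... < x_1,
  i.e. compare exponents of x_1, x_2, ... in turn.\<close>
definition deglex_less :: "monom \<Rightarrow> monom \<Rightarrow> bool" where
  "deglex_less m m' \<longleftrightarrow> mdeg m < mdeg m' \<or>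
     (mdeg m = mdeg m' \<and> (\<exists>i. Poly_Mapping.lookup m i < Poly_Mapping.lookup m' i \<and> (\<forall>j<i. Poly_Mapping.lookup m j = Poly_Mapping.lookup m' j)))"

definition is_monom_in :: "nat \<Rightarrow> monom \<Rightarrow> bool" where
  "is_monom_in n m \<longleftrightarrow> Poly_Mapping.keys m \<subseteq> {1..n}"

definition is_poly_in :: "nat \<Rightarrow> 'a::zero mpoly \<Rightarrow> bool" where
  "is_poly_in n P \<longleftrightarrow> (\<forall>m\<in>Poly_Mapping.keys P. is_monom_in n m)"

definition meval :: "'a::comm_semiring_1 mpoly \<Rightarrow> (nat \<Rightarrow> 'a) \<Rightarrow> 'a" where
  "meval P x = (\<Sum>m\<in>Poly_Mapping.keys P. Poly_Mapping.lookup P m * (\<Prod>i\<in>Poly_Mapping.keys m. x i ^ Poly_Mapping.lookup m i))"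

definition leading_monom :: "'a::zero mpoly \<Rightarrow> monom \<Rightarrow> bool" where
  "leading_monom P m \<longleftrightarrow> m \<in> Poly_Mapping.keys P \<and> (\<forall>m'\<in>Poly_Mapping.keys P. m' \<noteq> m \<longrightarrow> deglex_less m' m)"

definition Sm :: "nat \<Rightarrow> (nat \<Rightarrow> 'a::comm_semiring_1) set \<Rightarrow> monom set" where
  "Sm n X = {m. is_monom_in n m \<and>
     \<not> (\<exists>P::'a mpoly. P \<noteq> 0 \<and> is_poly_in n P \<and> (\<forall>x\<in>X. meval P x = 0) \<and> leading_monom P m)}"

definition charvec :: "nat set \<Rightarrow> nat \<Rightarrow> 'a::zero_neq_one" where
  "charvec F i = (if i \<in> F then 1 else 0)"

end

theory Submission
  imports Defs "HOL-Number_Theory.Residues"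
begin

text \<open>If \<open>deg y < p\<close>, the polynomial \<open>P\<close> witnessing that \<open>y\<close> is not standard for \<open>V\<close>
  has only monomials of degree \<open>< p\<close>, so each of them involves fewer than \<open>p\<close> variables.
  Split \<open>C = A \<union> E\<close> with \<open>|A| = p + 1\<close> and \<open>|E| = 2p - 1\<close>. A monomial whose support \<open>T \<subseteq> C\<close>
  meets \<open>E\<close> in \<open>t < p\<close> points is nonzero at \<open>v\<^sub>A\<^sub>\<union>\<^sub>B\<close> for exactly
  \<open>(2p - 1 - t) choose (p - 1 - t) = (p + r) choose r\<close> of the \<open>(p - 1)\<close>-subsets \<open>B \<subseteq> E\<close>,
  where \<open>r = p - 1 - t < p\<close>, and this number is \<open>1\<close> modulo \<open>p\<close>. Hence
  \<open>P(v\<^sub>C) = \<Sum>\<^sub>B P(v\<^sub>A\<^sub>\<union>\<^sub>B) = 0\<close>, so \<open>P\<close> vanishes on \<open>Q\<close> as well and \<open>y\<close> is not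
  standard for \<open>Q\<close>.\<close>

lemma CHAR_eq_card_prime:
  assumes "prime p" and "card (UNIV :: 'a::{idom,finite} set) = p"
  shows "CHAR('a) = p"
proof -
  have "prime CHAR('a)"
    by (intro prime_CHAR_semidom finite_imp_CHAR_pos) simp
  moreover have "CHAR('a) dvd p"
    using CHAR_dvd_CARD[where 'a='a] assms(2) by simp
  ultimately show ?thesis
    using assms(1) primes_dvd_imp_eq by blast
qed

lemma of_nat_add_choose_CHAR:
  assumes "CHAR('a::idom) = p" and "r < p"
  shows "(of_nat ((p + r) choose r) :: 'a) = 1"
  using assms(2)
proof (induction r)
  case 0
  then show ?case by simp
next
  case (Suc r)
  have "(of_nat (Suc r) :: 'a) * of_nat ((p + Suc r) choose Suc r)
      = of_nat (Suc (p + r)) * of_nat ((p + r) choose r)"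
    by (metis Suc_times_binomial add_Suc_right of_nat_mult)
  also have "\<dots> = of_nat (Suc r)"
  proof -
    have "(of_nat (Suc (p + r)) :: 'a) = of_nat (Suc r)"
      using assms(1) of_nat_CHAR[where 'a='a] by simp
    then show ?thesis using Suc by simp
  qed
  finally have "(of_nat (Suc r) :: 'a) * of_nat ((p + Suc r) choose Suc r) = of_nat (Suc r)" .
  moreover have "(of_nat (Suc r) :: 'a) \<noteq> 0"
    unfolding of_nat_eq_0_iff_char_dvd using Suc.prems assms(1) by (auto dest: nat_dvd_not_less)
  ultimately show ?case
    by (metis mult_cancel_left1)
qed

lemma meval_charvec:
  fixes P :: "'a::comm_semiring_1 mpoly"
  shows "meval P (charvec G) =
    (\<Sum>m\<in>Poly_Mapping.keys P. Poly_Mapping.lookup P m * of_bool (Poly_Mapping.keys m \<subseteq> G))"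
  unfolding meval_def
proof (intro sum.cong refl arg_cong2[where f = "(*)"])
  fix m :: monom
  show "(\<Prod>i\<in>Poly_Mapping.keys m. (charvec G i :: 'a) ^ Poly_Mapping.lookup m i)
      = of_bool (Poly_Mapping.keys m \<subseteq> G)"
  proof (cases "Poly_Mapping.keys m \<subseteq> G")
    case True
    then show ?thesis by (auto simp: charvec_def intro!: prod.neutral)
  next
    case False
    then obtain i where "i \<in> Poly_Mapping.keys m" "i \<notin> G" by auto
    moreover from this have "(charvec G i :: 'a) ^ Poly_Mapping.lookup m i = 0"
      by (simp add: charvec_def in_keys_iff power_0_left)
    ultimately show ?thesis
      using False by (auto intro: prod_zero)
  qed
qed

lemma card_keys_le_mdeg: "card (Poly_Mapping.keys m) \<le> mdeg m"
  unfolding mdeg_def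
  using sum_mono[of "Poly_Mapping.keys m" "\<lambda>_. 1::nat" "Poly_Mapping.lookup m"]
  by (simp add: in_keys_iff Suc_le_eq)

lemma leading_monom_mdeg_le:
  assumes "leading_monom P y" and "m \<in> Poly_Mapping.keys P"
  shows "mdeg m \<le> mdeg y"
  using assms unfolding leading_monom_def deglex_less_def by fastforce

lemma card_subsets_containing:
  assumes "finite E" and "T \<subseteq> E" and "card T \<le> k"
  shows "card {B. B \<subseteq> E \<and> card B = k \<and> T \<subseteq> B} = (card E - card T) choose (k - card T)"
proof -
  have "finite T"
    using assms(1,2) finite_subset by blast
  have "bij_betw (\<lambda>B. B - T) {B. B \<subseteq> E \<and> card B = k \<and> T \<subseteq> B} {B. B \<subseteq> E - T \<and> card B = k - card T}"
  proof (rule bij_betw_byWitness[where f' = "\<lambda>B. B \<union> T"])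
    show "(\<lambda>B. B - T) ` {B. B \<subseteq> E \<and> card B = k \<and> T \<subseteq> B} \<subseteq> {B. B \<subseteq> E - T \<and> card B = k - card T}"
      using assms(1) by (auto simp: card_Diff_subset finite_subset)
    show "(\<lambda>B. B \<union> T) ` {B. B \<subseteq> E - T \<and> card B = k - card T} \<subseteq> {B. B \<subseteq> E \<and> card B = k \<and> T \<subseteq> B}"
    proof (rule image_subsetI)
      fix B assume B: "B \<in> {B. B \<subseteq> E - T \<and> card B = k - card T}"
      then have "finite B"
        using assms(1) finite_subset by blast
      moreover have "B \<inter> T = {}"
        using B by blast
      ultimately show "B \<union> T \<in> {B. B \<subseteq> E \<and> card B = k \<and> T \<subseteq> B}"
        using B assms \<open>finite T\<close> by (auto simp: card_Un_disjoint)
    qed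
  qed auto
  then have "card {B. B \<subseteq> E \<and> card B = k \<and> T \<subseteq> B} = card {B. B \<subseteq> E - T \<and> card B = k - card T}"
    by (rule bij_betw_same_card)
  also have "\<dots> = (card E - card T) choose (k - card T)"
    using assms \<open>finite T\<close> by (simp add: n_subsets card_Diff_subset)
  finally show ?thesis .
qed

lemma of_nat_card_subsets_covering:
  assumes "CHAR('a::idom) = p" and "finite E" and "card E = 2 * p - 1" and "A \<inter> E = {}"
    and "finite T" and "card T < p"
  shows "(of_nat (card {B. B \<subseteq> E \<and> card B = p - 1 \<and> T \<subseteq> A \<union> B}) :: 'a) = of_bool (T \<subseteq> A \<union> E)"
proof (cases "T \<subseteq> A \<union> E")
  case True
  define t where "t = card (T \<inter> E)"
  have "t < p"
    using assms(5,6) card_mono[of T "T \<inter> E"] unfolding t_def by auto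
  have "{B. B \<subseteq> E \<and> card B = p - 1 \<and> T \<subseteq> A \<union> B} = {B. B \<subseteq> E \<and> card B = p - 1 \<and> T \<inter> E \<subseteq> B}"
    using True assms(4) by blast
  also have "card \<dots> = (card E - t) choose (p - 1 - t)"
    using assms(2) \<open>t < p\<close> unfolding t_def by (intro card_subsets_containing) auto
  also have "\<dots> = (p + (p - 1 - t)) choose (p - 1 - t)"
    using assms(3) \<open>t < p\<close> by (simp add: numeral_2_eq_2)
  finally show ?thesis
    using True of_nat_add_choose_CHAR[OF assms(1), of "p - 1 - t"] \<open>t < p\<close> by simp
next
  case False
  then have "{B. B \<subseteq> E \<and> card B = p - 1 \<and> T \<subseteq> A \<union> B} = {}"
    by blast
  with False show ?thesis
    by (simp only: card.empty of_nat_0 of_bool_eq)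
qed

lemma meval_charvec_Un_eq_sum_subsets:
  fixes P :: "'a::idom mpoly"
  assumes "CHAR('a) = p" and "finite E" and "card E = 2 * p - 1" and "A \<inter> E = {}"
    and small: "\<And>m. m \<in> Poly_Mapping.keys P \<Longrightarrow> card (Poly_Mapping.keys m) < p"
  shows "meval P (charvec (A \<union> E)) = (\<Sum>B | B \<subseteq> E \<and> card B = p - 1. meval P (charvec (A \<union> B)))"
proof -
  let ?BB = "{B. B \<subseteq> E \<and> card B = p - 1}"
  have "finite ?BB"
    using assms(2) by simp
  have "(\<Sum>B\<in>?BB. meval P (charvec (A \<union> B)))
      = (\<Sum>m\<in>Poly_Mapping.keys P. Poly_Mapping.lookup P m *
           (\<Sum>B\<in>?BB. of_bool (Poly_Mapping.keys m \<subseteq> A \<union> B)))"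
    unfolding meval_charvec sum_distrib_left by (rule sum.swap)
  also have "\<dots> = (\<Sum>m\<in>Poly_Mapping.keys P. Poly_Mapping.lookup P m * of_bool (Poly_Mapping.keys m \<subseteq> A \<union> E))"
  proof (intro sum.cong refl arg_cong2[where f = "(*)"])
    fix m assume "m \<in> Poly_Mapping.keys P"
    have "(of_nat (card {B. B \<subseteq> E \<and> card B = p - 1 \<and> Poly_Mapping.keys m \<subseteq> A \<union> B}) :: 'a)
        = of_bool (Poly_Mapping.keys m \<subseteq> A \<union> E)"
      using small[OF \<open>m \<in> Poly_Mapping.keys P\<close>] by (intro of_nat_card_subsets_covering[OF assms(1-4)]) auto
    moreover have "?BB \<inter> {B. Poly_Mapping.keys m \<subseteq> A \<union> B} = {B. B \<subseteq> E \<and> card B = p - 1 \<and> Poly_Mapping.keys m \<subseteq> A \<union> B}"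
      by blast
    ultimately show "(\<Sum>B\<in>?BB. of_bool (Poly_Mapping.keys m \<subseteq> A \<union> B)) = (of_bool (Poly_Mapping.keys m \<subseteq> A \<union> E) :: 'a)"
      using \<open>finite ?BB\<close> by (simp only: sum_of_bool_eq)
  qed
  finally show ?thesis
    by (simp add: meval_charvec)
qed

lemma meval_charvec_eq_0_by_averaging:
  fixes P :: "'a::idom mpoly"
  assumes "CHAR('a) = p" and "0 < p" and "finite C" and "C \<subseteq> U"
    and "card C = k + p" and "p \<le> k + 1"
    and vanish: "\<And>F. F \<subseteq> U \<Longrightarrow> card F = k \<Longrightarrow> meval P (charvec F) = 0"
    and small: "\<And>m. m \<in> Poly_Mapping.keys P \<Longrightarrow> card (Poly_Mapping.keys m) < p"
  shows "meval P (charvec C) = 0"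
proof -
  have "k + 1 - p \<le> card C"
    using assms(2,5) by linarith
  then obtain A where "A \<subseteq> C" and card_A: "card A = k + 1 - p"
    by (rule obtain_subset_with_card_n)
  define E where "E = C - A"
  have "finite A" "finite E"
    using \<open>A \<subseteq> C\<close> assms(3) finite_subset unfolding E_def by auto
  have "card E = 2 * p - 1" "A \<inter> E = {}" "A \<union> E = C"
    using \<open>A \<subseteq> C\<close> card_A assms(2,5,6) \<open>finite A\<close> unfolding E_def by (auto simp: card_Diff_subset)
  have "meval P (charvec (A \<union> B)) = 0" if "B \<subseteq> E" "card B = p - 1" for B
  proof (rule vanish)
    show "A \<union> B \<subseteq> U"
      using \<open>A \<subseteq> C\<close> \<open>B \<subseteq> E\<close> assms(4) unfolding E_def by blast
    have "finite B" "A \<inter> B = {}"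
      using \<open>B \<subseteq> E\<close> \<open>finite E\<close> \<open>A \<inter> E = {}\<close> finite_subset by blast+
    then show "card (A \<union> B) = k"
      using \<open>finite A\<close> card_A \<open>card B = p - 1\<close> assms(2,6) by (simp add: card_Un_disjoint)
  qed
  then have "(\<Sum>B | B \<subseteq> E \<and> card B = p - 1. meval P (charvec (A \<union> B))) = 0"
    by simp
  then show ?thesis
    using meval_charvec_Un_eq_sum_subsets[OF assms(1) \<open>finite E\<close> \<open>card E = 2 * p - 1\<close> \<open>A \<inter> E = {}\<close> small]
      \<open>A \<union> E = C\<close> by simp
qed

theorem mainTheorem11:
  fixes p :: nat and C :: "nat set" and y :: monom
    and V Q :: "(nat \<Rightarrow> 'k::{field,finite}) set"
  assumes "prime p"
    and "card (UNIV :: 'k set) = p"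
    and "C \<subseteq> {1..4*p}" and "card C = 3*p"
    and "V = {charvec F | F. F \<subseteq> {1..4*p} \<and> card F = 2*p}"
    and "Q = V \<union> {charvec C}"
    and "y \<in> Sm (4*p) Q - Sm (4*p) V"
  shows "mdeg y \<ge> p"
proof (rule ccontr)
  assume "\<not> mdeg y \<ge> p"
  from assms(7) obtain P :: "'k mpoly"
    where P: "P \<noteq> 0" "is_poly_in (4*p) P" "\<forall>x\<in>V. meval P x = 0" "leading_monom P y"
      and "y \<in> Sm (4*p) Q"
    unfolding Sm_def by auto
  have small: "card (Poly_Mapping.keys m) < p" if "m \<in> Poly_Mapping.keys P" for m
    using card_keys_le_mdeg[of m] leading_monom_mdeg_le[OF P(4) that] \<open>\<not> mdeg y \<ge> p\<close> by linarith
  have vanish: "meval P (charvec F) = 0" if "F \<subseteq> {1..4*p}" "card F = 2*p" for F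
    using P(3) that unfolding assms(5) by blast
  have "finite C" "card C = 2*p + p" "p \<le> 2*p + 1"
    using assms(3,4) finite_subset by auto
  then have "meval P (charvec C) = 0"
    using meval_charvec_eq_0_by_averaging[OF CHAR_eq_card_prime[OF assms(1,2)]
        prime_gt_0_nat[OF assms(1)] \<open>finite C\<close> assms(3) _ _ vanish small]
    by blast
  then have "\<forall>x\<in>Q. meval P x = 0"
    using P(3) unfolding assms(6) by blast
  with P \<open>y \<in> Sm (4*p) Q\<close> show False
    unfolding Sm_def by blast
qed

end
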